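(* Let $p$ be a prime and let $a,b,c$ be positive integers with $b>1$, $c\mid p^a-1$, $c$ a primitive divisor of $p^a-1$, and $p-1\mid c$. Put $m=ab$, $n=bc$, $u=\frac{p^a-1}{c}$, and assume $n\mid p^m-1$ and $n$ is a primitive divisor of $p^m-1$; put $k=\frac{p^m-1}{n}$. Let $\mathcal{C}=\mathcal{C}(k,p^m)$ and $\mathcal{C}_0=\mathcal{C}(u,p^a)$. Suppose the distinct weights occurring in $\mathcal{C}_0$ (including $0$) are $w_1,\dots,w_s$ with frequencies $A_{w_i}(\mathcal{C}_0)=m_i$. Then the weights of $\mathcal{C}$ are exactly the numbers $w_{\ell_1,\dots,\ell_s}=\ell_1w_1+\cdots+\ell_sw_s$ with $(\ell_1,\dots,\ell_s)\in\mathbb{N}_0^s$ and $\ell_1+\cdots+\ell_s=b$, and the tuple $(\ell_1,\dots,\ell_s)$ contributes frequency $\binom{b}{\ell_1,\dots,\ell_s}m_1^{\ell_1}\cdots m_s^{\ell_s}$; i.e. for every integer $w$, $$A_w(\mathcal{C})=\sum_{\substack{\ell_1+\cdots+\ell_s=b\\ \ell_1w_1+\cdots+\ell_sw_s=w}}\binom{b}{\ell_1,\dots,\ell_s}m_1^{\ell_1}\cdots m_s^{\ell_s}.$$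
   Context: Let $p$ be prime, $q=p^m$, $\omega$ a primitive element of $\mathbb{F}_q$, $k\mid q-1$, $n=\frac{q-1}{k}$. The irreducible cyclic code $\mathcal{C}(k,q)\subseteq\mathbb{F}_p^n$ consists of the words $c_\gamma=(\mathrm{Tr}_{q/p}(\gamma\,\omega^{ki}))_{i=0}^{n-1}$, $\gamma\in\mathbb{F}_q$. The weight $w(c)$ of a word is its number of nonzero coordinates, and the frequency of a weight is $A_w=\#\{\gamma\in\mathbb{F}_q: w(c_\gamma)=w\}$. A positive integer $d$ is a primitive divisor of $p^m-1$ if $d\mid p^m-1$ and $d\nmid p^t-1$ for all $1\le t<m$. $\binom{b}{\ell_1,\dots,\ell_s}$ is the multinomial coefficient. *)

theory Defs
  imports "HOL-Computational_Algebra.Primes" "HOL-Library.FuncSet"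
begin

definition trace_pm :: "nat \<Rightarrow> nat \<Rightarrow> 'a::field \<Rightarrow> 'a" where
  "trace_pm p m x = (\<Sum>j<m. x ^ (p ^ j))"

definition primitive_elem :: "'a::field \<Rightarrow> bool" where
  "primitive_elem \<omega> \<longleftrightarrow> \<omega> \<noteq> 0 \<and> (\<forall>x. x \<noteq> 0 \<longrightarrow> (\<exists>i::nat. x = \<omega> ^ i))"

definition primitive_divisor :: "nat \<Rightarrow> nat \<Rightarrow> nat \<Rightarrow> bool" where
  "primitive_divisor p m d \<longleftrightarrow> d dvd p ^ m - 1 \<and> (\<forall>t. 1 \<le> t \<and> t < m \<longrightarrow> \<not> d dvd p ^ t - 1)"

text \<open>Weight of the codeword c_gamma of C(k, p^m), length n = (p^m-1)/k.\<close>
definition cweight :: "nat \<Rightarrow> nat \<Rightarrow> nat \<Rightarrow> 'a::field \<Rightarrow> 'a \<Rightarrow> nat" where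
  "cweight p m k \<omega> \<gamma> = card {i. i < (p ^ m - 1) div k \<and> trace_pm p m (\<gamma> * \<omega> ^ (k * i)) \<noteq> 0}"

definition freq :: "nat \<Rightarrow> nat \<Rightarrow> nat \<Rightarrow> 'a::{finite,field} \<Rightarrow> nat \<Rightarrow> nat" where
  "freq p m k \<omega> w = card {\<gamma>::'a. cweight p m k \<omega> \<gamma> = w}"

definition multinom :: "nat \<Rightarrow> ('i \<Rightarrow> nat) \<Rightarrow> 'i set \<Rightarrow> nat" where
  "multinom b l I = fact b div (\<Prod>i\<in>I. fact (l i))"

end

theory Submission
  imports Defs "HOL-Computational_Algebra.Polynomial" "HOL-Combinatorics.Multiset_Permutations"
begin

text \<open>
  Let \<open>K\<close> be the subfield of \<open>GF(p ^ (a * b))\<close> with \<open>p ^ a\<close> elements and let \<open>g = \<omega> ^ k\<close>, an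
  element of order \<open>n = b * c\<close>. As \<open>n\<close> is a primitive divisor, the conjugates \<open>g ^ p ^ (a * i)\<close>,
  \<open>i < b\<close>, are distinct, so \<open>1, g, \<dots>, g ^ (b - 1)\<close> is a \<open>K\<close>-basis and
  \<open>\<gamma> \<mapsto> (Tr\<^sub>K(\<gamma> * g ^ j))\<^sub>j\<^sub><\<^sub>b\<close> is a bijection onto \<open>K ^ b\<close>. Writing the index \<open>i < b * c\<close> as
  \<open>j + b * t\<close> and \<open>\<omega> ^ (k * b) = g ^ b\<close> (of order \<open>c\<close>, lying in \<open>K\<close>), the weight of the codeword
  of \<open>\<gamma>\<close> becomes \<open>\<Sum>\<^sub>j w(Tr\<^sub>K(\<gamma> * g ^ j))\<close>, where \<open>w(y)\<close> counts the \<open>c\<close>-th roots of unity \<open>z\<close> with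
  \<open>Tr(y * z) \<noteq> 0\<close>. Transported along an isomorphism \<open>GF(p ^ a) \<cong> K\<close>, \<open>w\<close> is the weight function of
  \<open>\<C>(u, p ^ a)\<close>. So \<open>A\<^sub>w(\<C>)\<close> counts \<open>b\<close>-tuples of codewords of \<open>\<C>\<^sub>0\<close> of total weight \<open>w\<close>, and grouping
  the tuples by how often each weight occurs gives the multinomial sum.
\<close>

lemma card_UNIV_field_ge_2: "2 \<le> card (UNIV :: 'F::{finite,field} set)"
proof -
  have "card {0::'F, 1} \<le> card (UNIV :: 'F set)"
    by (rule card_mono) auto
  then show ?thesis
    by simp
qed

lemma of_nat_card_UNIV_field: "of_nat (card (UNIV :: 'F::{finite,field} set)) = (0 :: 'F)"
proof -
  have "(\<Sum>y\<in>UNIV. y + 1) = (\<Sum>y\<in>(UNIV :: 'F set). y)"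
    by (rule sum.reindex_bij_witness[of _ "\<lambda>y. y - 1" "\<lambda>y. y + 1"]) auto
  then show ?thesis
    by (simp add: sum.distrib)
qed

lemma CHAR_finite_field:
  assumes "prime p" and "card (UNIV :: 'F::{finite,field} set) = p ^ e"
  shows "CHAR('F) = p"
proof -
  have "0 < CHAR('F)"
    by (rule finite_imp_CHAR_pos) simp
  then have "prime CHAR('F)"
    by (rule prime_CHAR_semidom)
  moreover have "CHAR('F) dvd p ^ e"
    using of_nat_card_UNIV_field[where 'F = 'F] assms(2) by (metis of_nat_eq_0_iff_char_dvd)
  ultimately show ?thesis
    using assms(1) prime_dvd_power primes_dvd_imp_eq by blast
qed

text \<open>The library's \<open>finite_field_power_card_eq_same\<close> needs the sort \<open>finite_field\<close>, which is not
  available for a type variable of sort \<open>{finite,field}\<close>.\<close>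
lemma finite_field_power_card_minus_1:
  fixes x :: "'F::{finite,field}"
  assumes "x \<noteq> 0"
  shows "x ^ (card (UNIV :: 'F set) - 1) = 1"
proof -
  let ?U = "UNIV - {0 :: 'F}"
  have "(\<Prod>y\<in>?U. x * y) = (\<Prod>y\<in>?U. y)"
    by (rule prod.reindex_bij_witness[of _ "\<lambda>y. y / x" "\<lambda>y. x * y"]) (use assms in auto)
  moreover have "(\<Prod>y\<in>?U. x * y) = x ^ card ?U * (\<Prod>y\<in>?U. y)"
    by (simp add: prod.distrib)
  moreover have "(\<Prod>y\<in>?U. y) \<noteq> 0"
    by simp
  ultimately show ?thesis
    by (simp add: card_Diff_singleton)
qed

lemma finite_field_power_card:
  fixes x :: "'F::{finite,field}"
  shows "x ^ card (UNIV :: 'F set) = x"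
proof (cases "x = 0")
  case False
  have "card (UNIV :: 'F set) = Suc (card (UNIV :: 'F set) - 1)"
    using card_UNIV_field_ge_2[where 'F = 'F] by simp
  then show ?thesis
    by (metis False finite_field_power_card_minus_1 mult.right_neutral power_Suc)
qed (use card_UNIV_field_ge_2[where 'F = 'F] in simp)

lemma power_mod_order:
  fixes x :: "'a::monoid_mult"
  assumes "x ^ N = 1"
  shows "x ^ i = x ^ (i mod N)"
proof -
  have "x ^ i = x ^ (N * (i div N) + i mod N)"
    by simp
  also have "\<dots> = (x ^ N) ^ (i div N) * x ^ (i mod N)"
    by (simp only: power_add power_mult)
  finally show ?thesis
    using assms by simp
qed

lemma primitive_elem_order_ge:
  fixes \<omega> :: "'F::{finite,field}"
  assumes "primitive_elem \<omega>" "0 < r" "\<omega> ^ r = 1"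
  shows "card (UNIV :: 'F set) - 1 \<le> r"
proof -
  have "UNIV - {0} \<subseteq> (\<lambda>i. \<omega> ^ i) ` {..<r}"
  proof
    fix x :: 'F
    assume "x \<in> UNIV - {0}"
    then obtain i where "x = \<omega> ^ i"
      using assms(1) by (auto simp: primitive_elem_def)
    then show "x \<in> (\<lambda>i. \<omega> ^ i) ` {..<r}"
      using power_mod_order[OF assms(3), of i] \<open>0 < r\<close> by auto
  qed
  then have "card (UNIV - {0 :: 'F}) \<le> card ((\<lambda>i. \<omega> ^ i) ` {..<r})"
    by (intro card_mono) auto
  also have "\<dots> \<le> r"
    using card_image_le[of "{..<r}" "\<lambda>i. \<omega> ^ i"] by simp
  finally show ?thesis
    by (simp add: card_Diff_singleton)
qed

lemma primitive_elem_power_eq_1_iff: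
  fixes \<omega> :: "'F::{finite,field}"
  assumes "primitive_elem \<omega>"
  shows "\<omega> ^ i = 1 \<longleftrightarrow> (card (UNIV :: 'F set) - 1) dvd i"
proof -
  let ?N = "card (UNIV :: 'F set) - 1"
  have "\<omega> \<noteq> 0"
    using assms by (simp add: primitive_elem_def)
  then have \<omega>N: "\<omega> ^ ?N = 1"
    by (rule finite_field_power_card_minus_1)
  have "0 < ?N"
    using card_UNIV_field_ge_2[where 'F = 'F] by simp
  show ?thesis
  proof
    assume "\<omega> ^ i = 1"
    then have "\<omega> ^ (i mod ?N) = 1"
      using power_mod_order[OF \<omega>N, of i] by simp
    then have "i mod ?N = 0"
      using primitive_elem_order_ge[OF assms, of "i mod ?N"] mod_less_divisor[OF \<open>0 < ?N\<close>, of i]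
      by (cases "i mod ?N = 0") auto
    then show "?N dvd i"
      by auto
  next
    assume "?N dvd i"
    then obtain t where "i = ?N * t" ..
    then show "\<omega> ^ i = 1"
      using \<omega>N by (simp only: power_mult power_one)
  qed
qed

lemma power_eq_power_iff_mod_order:
  fixes x :: "'F::field"
  assumes "0 < N" and order: "\<And>i. x ^ i = 1 \<longleftrightarrow> N dvd i"
  shows "x ^ s = x ^ t \<longleftrightarrow> s mod N = t mod N"
proof -
  have "x \<noteq> 0"
    using order[of N] \<open>0 < N\<close> by (auto simp: power_0_left)
  have le: "x ^ s = x ^ t \<longleftrightarrow> s mod N = t mod N" if "s \<le> t" for s t
  proof -
    have "x ^ t = x ^ s * x ^ (t - s)"
      using that by (simp flip: power_add)
    then have "x ^ s = x ^ t \<longleftrightarrow> N dvd t - s"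
      using \<open>x \<noteq> 0\<close> order[of "t - s"] by auto
    then show ?thesis
      using mod_eq_dvd_iff_nat[OF that, of N] by auto
  qed
  show ?thesis
    using le[of s t] le[of t s] by (cases "s \<le> t") auto
qed

lemma inj_on_frobenius_conjugates:
  fixes x :: "'F::field"
  assumes "0 < p" "0 < e" "0 < N" "coprime N p" and order: "\<And>i. x ^ i = 1 \<longleftrightarrow> N dvd i"
    and not_dvd: "\<And>t. 0 < t \<Longrightarrow> t < e * d \<Longrightarrow> \<not> N dvd p ^ t - 1"
  shows "inj_on (\<lambda>i. x ^ (p ^ (e * i))) {..<d}"
proof (rule linorder_inj_onI')
  fix i j
  assume "i \<in> {..<d}" "j \<in> {..<d}" "i < j"
  show "x ^ (p ^ (e * i)) \<noteq> x ^ (p ^ (e * j))"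
  proof
    assume "x ^ (p ^ (e * i)) = x ^ (p ^ (e * j))"
    moreover have "p ^ (e * i) \<le> p ^ (e * j)"
      using \<open>i < j\<close> \<open>0 < p\<close> by (intro power_increasing) auto
    ultimately have "N dvd p ^ (e * j) - p ^ (e * i)"
      using power_eq_power_iff_mod_order[OF \<open>0 < N\<close> order] mod_eq_dvd_iff_nat by metis
    also have "p ^ (e * j) - p ^ (e * i) = p ^ (e * i) * (p ^ (e * (j - i)) - 1)"
      using \<open>i < j\<close> by (simp add: diff_mult_distrib2 right_diff_distrib' flip: power_add)
    finally have "N dvd p ^ (e * (j - i)) - 1"
      using \<open>coprime N p\<close> by (simp add: coprime_dvd_mult_right_iff)
    moreover have "0 < e * (j - i)" "e * (j - i) < e * d"
      using \<open>0 < e\<close> \<open>i < j\<close> \<open>j \<in> {..<d}\<close> by auto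
    ultimately show False
      using not_dvd by blast
  qed
qed

lemma finite_card_power_eq_power_le:
  assumes "m < n"
  shows "finite {x :: 'a::idom. x ^ n = x ^ m}" and "card {x :: 'a. x ^ n = x ^ m} \<le> n"
proof -
  let ?Q = "monom 1 n - monom 1 m :: 'a poly"
  have "coeff ?Q n = 1"
    using assms by (simp add: coeff_monom)
  then have "?Q \<noteq> 0"
    by (metis coeff_0 zero_neq_one)
  have roots: "{x. x ^ n = x ^ m} = {x. poly ?Q x = 0}"
    by (simp add: poly_monom)
  show "finite {x :: 'a. x ^ n = x ^ m}"
    unfolding roots by (rule poly_roots_finite[OF \<open>?Q \<noteq> 0\<close>])
  have "card {x :: 'a. x ^ n = x ^ m} \<le> degree ?Q"
    unfolding roots by (rule card_poly_roots_bound[OF \<open>?Q \<noteq> 0\<close>])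
  also have "\<dots> \<le> n"
    using assms by (intro degree_diff_le) (auto intro: order.trans[OF degree_monom_le])
  finally show "card {x :: 'a. x ^ n = x ^ m} \<le> n" .
qed

lemma bij_betw_powers_roots_of_unity:
  fixes x :: "'F::field"
  assumes "0 < N" and order: "\<And>i. x ^ i = 1 \<longleftrightarrow> N dvd i"
  shows "bij_betw (\<lambda>t. x ^ t) {..<N} {y. y ^ N = 1}"
proof -
  have inj: "inj_on (\<lambda>t. x ^ t) {..<N}"
    using power_eq_power_iff_mod_order[OF assms] by (auto simp: inj_on_def)
  have "(x ^ t) ^ N = 1" for t
    using order[of "t * N"] by (simp add: power_mult)
  then have sub: "(\<lambda>t. x ^ t) ` {..<N} \<subseteq> {y. y ^ N = 1}"
    by auto
  have "card {y :: 'F. y ^ N = 1} \<le> card ((\<lambda>t. x ^ t) ` {..<N})"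
    using finite_card_power_eq_power_le(2)[OF \<open>0 < N\<close>] card_image[OF inj] by simp
  then have "(\<lambda>t. x ^ t) ` {..<N} = {y. y ^ N = 1}"
    using sub finite_card_power_eq_power_le(1)[OF \<open>0 < N\<close>] by (intro card_seteq) auto
  then show ?thesis
    using inj by (simp add: bij_betw_def)
qed

lemma bij_betw_card_filter:
  assumes "bij_betw f A B"
  shows "card {x \<in> A. P (f x)} = card {y \<in> B. P y}"
proof -
  have "bij_betw f {x \<in> A. P (f x)} {y \<in> B. P y}"
    using assms by (auto simp: bij_betw_def inj_on_def)
  then show ?thesis
    by (rule bij_betw_same_card)
qed

subsection \<open>Frobenius and polynomials over the prime field\<close>

lemma power_power_fixed:
  fixes y :: "'a::monoid_mult"
  assumes "y ^ n = y"
  shows "y ^ (n ^ i) = y"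
  by (induction i) (simp_all add: power_mult assms)

lemma of_int_power_CHAR_power:
  assumes "prime CHAR('a::comm_ring_1)"
  shows "(of_int z :: 'a) ^ (CHAR('a) ^ e) = of_int z"
proof -
  let ?C = "CHAR('a)"
  have nat_fixed: "(of_nat n :: 'a) ^ ?C = of_nat n" for n
  proof (induction n)
    case 0
    then show ?case
      using assms prime_gt_0_nat by (simp add: power_0_left)
  next
    case (Suc n)
    then show ?case
      using freshmans_dream[OF assms refl, of "of_nat n" 1] by (simp add: add_ac)
  qed
  have "of_int (z - z mod int ?C) = (0 :: 'a)"
    by (simp add: of_int_eq_0_iff_char_dvd minus_mod_eq_mult_div)
  then have "(of_int z :: 'a) = of_nat (nat (z mod int ?C))"
    using assms prime_gt_0_nat by simp
  then show ?thesis
    using power_power_fixed[OF nat_fixed] by simp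
qed

lemma poly_power_CHAR_power:
  fixes Q :: "'a::comm_ring_1 poly"
  assumes "prime CHAR('a)" and "m = CHAR('a) ^ e" and coeffs: "\<And>i. coeff Q i ^ m = coeff Q i"
  shows "poly Q (z ^ m) = poly Q z ^ m"
proof -
  have "poly Q z ^ m = (\<Sum>i\<le>degree Q. (coeff Q i * z ^ i) ^ m)"
    unfolding poly_altdef using assms(1,2) by (rule freshmans_dream_sum')
  also have "\<dots> = (\<Sum>i\<le>degree Q. coeff Q i * (z ^ m) ^ i)"
    using coeffs by (simp add: power_mult_distrib mult.commute flip: power_mult)
  finally show ?thesis
    by (simp add: poly_altdef)
qed

text \<open>Fixed coefficients make every conjugate \<open>z ^ p ^ (e * i)\<close> of the root \<open>z\<close> a root as well.\<close>
lemma poly_eq_0_if_distinct_conjugate_roots: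
  fixes Q :: "'F::field poly"
  assumes "CHAR('F) = p" "prime p" and coeffs: "\<And>i. coeff Q i ^ (p ^ e) = coeff Q i"
    and "degree Q < d" "poly Q z = 0" and conj: "inj_on (\<lambda>i. z ^ (p ^ (e * i))) {..<d}"
  shows "Q = 0"
proof (rule ccontr)
  assume "Q \<noteq> 0"
  have "poly Q (z ^ (p ^ (e * i))) = 0" for i
  proof -
    have "coeff Q j ^ (p ^ (e * i)) = coeff Q j" for j
      using power_power_fixed[of "coeff Q j", OF coeffs] by (simp add: power_mult)
    then have "poly Q (z ^ (p ^ (e * i))) = poly Q z ^ (p ^ (e * i))"
      using assms(1,2) by (intro poly_power_CHAR_power) auto
    then show ?thesis
      using \<open>poly Q z = 0\<close> assms(2) by (simp add: prime_gt_0_nat power_0_left)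
  qed
  then have "(\<lambda>i. z ^ (p ^ (e * i))) ` {..<d} \<subseteq> {x. poly Q x = 0}"
    by auto
  then have "card ((\<lambda>i. z ^ (p ^ (e * i))) ` {..<d}) \<le> card {x. poly Q x = 0}"
    by (intro card_mono poly_roots_finite \<open>Q \<noteq> 0\<close>)
  also have "\<dots> \<le> degree Q"
    by (rule card_poly_roots_bound[OF \<open>Q \<noteq> 0\<close>])
  finally show False
    using card_image[OF conj] \<open>degree Q < d\<close> by simp
qed

lemma map_poly_of_int_add:
  "map_poly (of_int :: int \<Rightarrow> 'a::comm_ring_1) (P + Q) = map_poly of_int P + map_poly of_int Q"
  by (rule poly_eqI) (simp add: coeff_map_poly)

lemma map_poly_of_int_diff:
  "map_poly (of_int :: int \<Rightarrow> 'a::comm_ring_1) (P - Q) = map_poly of_int P - map_poly of_int Q"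
  by (rule poly_eqI) (simp add: coeff_map_poly)

lemma map_poly_of_int_mult:
  "map_poly (of_int :: int \<Rightarrow> 'a::comm_ring_1) (P * Q) = map_poly of_int P * map_poly of_int Q"
  by (rule poly_eqI) (simp add: coeff_map_poly coeff_mult)

lemma map_poly_of_int_sum:
  "map_poly (of_int :: int \<Rightarrow> 'a::comm_ring_1) (\<Sum>i\<in>I. P i) = (\<Sum>i\<in>I. map_poly of_int (P i))"
  by (rule poly_eqI) (simp add: coeff_map_poly coeff_sum)

lemma coeff_sum_monom: "coeff (\<Sum>i<d. monom (c i) i) j = (if j < d then c j else 0)"
  by (simp add: coeff_sum coeff_monom)

lemma degree_sum_monom_less:
  assumes "0 < d"
  shows "degree (\<Sum>i<d. monom (c i) i) < d"
  using assms by (intro degree_lessI) (auto simp: coeff_sum_monom)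

lemma map_poly_of_int_eq_0_iff_CHAR_dvd:
  "map_poly (of_int :: int \<Rightarrow> 'a::comm_ring_1) P = 0 \<longleftrightarrow> (\<forall>i. int CHAR('a) dvd coeff P i)"
  by (simp add: poly_eq_iff coeff_map_poly of_int_eq_0_iff_char_dvd)

subsection \<open>Embedding \<open>GF(p ^ a)\<close> into a finite field of characteristic \<open>p\<close>\<close>

lemma inj_on_conjugates_primitive_elem:
  fixes \<omega> :: "'F::{finite,field}"
  assumes "prime p" "0 < a" "card (UNIV :: 'F set) = p ^ a" "primitive_elem \<omega>"
  shows "inj_on (\<lambda>i. \<omega> ^ (p ^ i)) {..<a}"
proof -
  have "1 < p"
    using assms(1) by (rule prime_gt_1_nat)
  then have "1 < p ^ a"
    using \<open>0 < a\<close> by (rule one_less_power)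
  have "inj_on (\<lambda>i. \<omega> ^ (p ^ (1 * i))) {..<a}"
  proof (rule inj_on_frobenius_conjugates)
    show "0 < p" "0 < (1 :: nat)" "0 < p ^ a - 1"
      using \<open>1 < p\<close> \<open>1 < p ^ a\<close> by auto
    show "coprime (p ^ a - 1) p"
      using coprime_diff_one_left_nat[of "p ^ a"] \<open>1 < p\<close> \<open>0 < a\<close> by simp
    show "\<omega> ^ i = 1 \<longleftrightarrow> (p ^ a - 1) dvd i" for i
      using primitive_elem_power_eq_1_iff[OF assms(4)] assms(3) by simp
    show "\<not> (p ^ a - 1) dvd p ^ t - 1" if "0 < t" "t < 1 * a" for t
    proof
      assume "(p ^ a - 1) dvd p ^ t - 1"
      moreover have "1 < p ^ t"
        using \<open>1 < p\<close> \<open>0 < t\<close> by (rule one_less_power)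
      moreover have "p ^ t < p ^ a"
        using \<open>1 < p\<close> \<open>t < 1 * a\<close> by (intro power_strict_increasing) auto
      ultimately show False
        using dvd_imp_le[of "p ^ a - 1" "p ^ t - 1"] by linarith
    qed
  qed
  then show ?thesis
    by simp
qed

lemma prime_dvd_coeff_if_root_of_low_degree:
  fixes \<omega> :: "'F::{finite,field}"
  assumes "prime p" "card (UNIV :: 'F set) = p ^ a" "primitive_elem \<omega>"
    and "degree r < a" and "poly (map_poly of_int r) \<omega> = 0"
  shows "int p dvd coeff r i"
proof -
  have char: "CHAR('F) = p"
    using assms(1,2) by (rule CHAR_finite_field)
  have "0 < a"
    using \<open>degree r < a\<close> by simp
  have "map_poly (of_int :: int \<Rightarrow> 'F) r = 0"
  proof (rule poly_eq_0_if_distinct_conjugate_roots[OF char \<open>prime p\<close>])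
    show "coeff (map_poly of_int r) i ^ (p ^ 1) = (coeff (map_poly of_int r) i :: 'F)" for i
      using of_int_power_CHAR_power[where 'a = 'F, of "coeff r i" 1] char \<open>prime p\<close> by (simp add: coeff_map_poly)
    show "degree (map_poly (of_int :: int \<Rightarrow> 'F) r) < a"
      using \<open>degree r < a\<close> map_poly_degree_leq[of "of_int :: int \<Rightarrow> 'F" r] by linarith
    show "inj_on (\<lambda>i. \<omega> ^ (p ^ (1 * i))) {..<a}"
      using inj_on_conjugates_primitive_elem[OF assms(1) \<open>0 < a\<close> assms(2,3)] by simp
  qed fact
  then show ?thesis
    using char by (simp add: map_poly_of_int_eq_0_iff_CHAR_dvd)
qed

lemma prime_field_combinations_surj:
  fixes \<omega> :: "'F::{finite,field}"
  assumes "prime p" "0 < a" "card (UNIV :: 'F set) = p ^ a" "primitive_elem \<omega>"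
  shows "(\<lambda>cf. \<Sum>i<a. of_nat (cf i) * \<omega> ^ i) ` PiE {..<a} (\<lambda>_. {0..<p}) = UNIV"
proof -
  define V :: "(nat \<Rightarrow> nat) \<Rightarrow> 'F" where "V cf = (\<Sum>i<a. of_nat (cf i) * \<omega> ^ i)" for cf
  let ?S = "PiE {..<a} (\<lambda>_. {0..<p})"
  have "inj_on V ?S"
  proof (rule inj_onI)
    fix cf cf'
    assume cf: "cf \<in> ?S" "cf' \<in> ?S" and "V cf = V cf'"
    define r where "r = (\<Sum>i<a. monom (int (cf i) - int (cf' i)) i)"
    have "poly (map_poly of_int r) \<omega> = 0"
      using \<open>V cf = V cf'\<close>
      by (simp add: r_def V_def map_poly_of_int_sum map_poly_monom poly_sum poly_monom
          left_diff_distrib sum_subtractf)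
    moreover have "degree r < a"
      unfolding r_def using \<open>0 < a\<close> by (rule degree_sum_monom_less)
    ultimately have dvd: "int p dvd coeff r i" for i
      using assms(1,3,4) prime_dvd_coeff_if_root_of_low_degree by blast
    have "int p dvd int (cf i) - int (cf' i)" if "i < a" for i
      using dvd[of i] that by (simp add: r_def coeff_sum_monom)
    moreover have "cf i < p" "cf' i < p" if "i < a" for i
      using cf that by (auto simp: PiE_iff)
    ultimately have "cf i = cf' i" if "i < a" for i
      using that by (metis mod_eq_dvd_iff mod_less of_nat_eq_iff of_nat_mod)
    then show "cf = cf'"
      using cf by (intro PiE_ext) auto
  qed
  moreover have "card ?S = card (UNIV :: 'F set)"
    using assms(3) by (simp add: card_PiE)
  ultimately show ?thesis
    unfolding V_def[symmetric] by (intro card_subset_eq) (auto simp: card_image)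
qed

lemma exists_monic_int_poly_root:
  fixes \<omega> :: "'F::{finite,field}"
  assumes "prime p" "0 < a" "card (UNIV :: 'F set) = p ^ a" "primitive_elem \<omega>"
  obtains f :: "int poly" where "degree f = a" "lead_coeff f = 1" "poly (map_poly of_int f) \<omega> = 0"
proof -
  have "- (\<omega> ^ a) \<in> (\<lambda>cf. \<Sum>i<a. of_nat (cf i) * \<omega> ^ i) ` PiE {..<a} (\<lambda>_. {0..<p})"
    using prime_field_combinations_surj[OF assms] by simp
  then obtain cf where cf: "(\<Sum>i<a. of_nat (cf i) * \<omega> ^ i) = - (\<omega> ^ a)"
    by auto
  define f where "f = monom 1 a + (\<Sum>i<a. monom (int (cf i)) i)"
  have "degree (\<Sum>i<a. monom (int (cf i)) i) < a"
    using \<open>0 < a\<close> by (rule degree_sum_monom_less)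
  then have "degree f = a"
    unfolding f_def by (subst degree_add_eq_left) (auto simp: degree_monom_eq)
  moreover have "lead_coeff f = 1"
    unfolding \<open>degree f = a\<close> by (simp add: f_def coeff_sum_monom)
  moreover have "poly (map_poly of_int f) \<omega> = 0"
    using cf by (simp add: f_def map_poly_of_int_add map_poly_of_int_sum map_poly_monom poly_sum poly_monom)
  ultimately show thesis
    by (rule that)
qed

lemma map_poly_of_int_dvd_if_root:
  fixes \<omega> :: "'b::{finite,field}"
  assumes "prime p" "card (UNIV :: 'b set) = p ^ a" "primitive_elem \<omega>"
    and f: "degree f = a" "lead_coeff f = 1" "poly (map_poly of_int f) \<omega> = 0"
    and "CHAR('F::field) = p" and P: "poly (map_poly of_int P) \<omega> = 0"
  shows "map_poly (of_int :: int \<Rightarrow> 'F) f dvd map_poly of_int P"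
proof -
  obtain q r where qr: "pseudo_divmod P f = (q, r)"
    by (metis surj_pair)
  have "f \<noteq> 0"
    using f by auto
  have P_eq: "P = f * q + r"
    using pseudo_divmod(1)[OF \<open>f \<noteq> 0\<close> qr] f by simp
  have "int p dvd coeff r i" for i
  proof (cases "r = 0")
    case False
    then have "degree r < a"
      using pseudo_divmod(2)[OF \<open>f \<noteq> 0\<close> qr] f by simp
    moreover have "poly (map_poly of_int r) \<omega> = 0"
      using P f by (simp add: P_eq map_poly_of_int_add map_poly_of_int_mult)
    ultimately show ?thesis
      by (rule prime_dvd_coeff_if_root_of_low_degree[OF assms(1-3)])
  qed simp
  then have "map_poly (of_int :: int \<Rightarrow> 'F) r = 0"
    using \<open>CHAR('F) = p\<close> by (simp add: map_poly_of_int_eq_0_iff_CHAR_dvd)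
  then show ?thesis
    by (simp add: P_eq map_poly_of_int_add map_poly_of_int_mult)
qed

lemma X_power_card_minus_X_eq_prod:
  "(monom 1 (card (UNIV :: 'F set)) - monom 1 1 :: 'F::{finite,field} poly) = (\<Prod>x\<in>UNIV. [:- x, 1:])"
proof (rule poly_eqI_degree_lead_coeff[of _ "card (UNIV :: 'F set)" _ UNIV])
  let ?N = "card (UNIV :: 'F set)"
  have N: "2 \<le> ?N"
    by (rule card_UNIV_field_ge_2)
  have deg: "degree (\<Prod>x\<in>(UNIV :: 'F set). [:- x, 1:]) = ?N"
    by (subst degree_prod_eq_sum_degree) auto
  have lead: "lead_coeff (\<Prod>x\<in>(UNIV :: 'F set). [:- x, 1:]) = 1"
    by (simp add: lead_coeff_prod)
  show "coeff (monom 1 ?N - monom 1 1 :: 'F poly) ?N = coeff (\<Prod>x\<in>UNIV. [:- x, 1:]) ?N"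
    using N deg lead by (simp add: coeff_monom)
  show "degree (monom 1 ?N - monom 1 1 :: 'F poly) \<le> ?N"
    using N by (intro degree_diff_le) (auto intro: order.trans[OF degree_monom_le])
  show "degree (\<Prod>x\<in>(UNIV :: 'F set). [:- x, 1:]) \<le> ?N"
    using deg by simp
  fix z :: 'F
  have "poly (\<Prod>x\<in>UNIV. [:- x, 1:]) z = (\<Prod>x\<in>UNIV. z - x)"
    by (simp add: poly_prod)
  also have "\<dots> = 0"
    by (rule prod_zero) auto
  finally show "poly (monom 1 ?N - monom 1 1 :: 'F poly) z = poly (\<Prod>x\<in>UNIV. [:- x, 1:]) z"
    by (simp add: poly_monom finite_field_power_card)
qed auto

lemma dvd_prod_linear_factors_imp_root:
  fixes F :: "'F::field poly"
  assumes "finite A" and "F dvd (\<Prod>x\<in>A. [:- x, 1:])" and "0 < degree F"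
  shows "\<exists>x\<in>A. poly F x = 0"
  using assms
proof (induction A rule: finite_induct)
  case empty
  then have "F \<noteq> 0" "is_unit F"
    by auto
  then show ?case
    using empty.prems(2) is_unit_iff_degree[OF \<open>F \<noteq> 0\<close>] by simp
next
  case (insert x A)
  show ?case
  proof (cases "poly F x = 0")
    case False
    from insert.prems(1) obtain G where G: "[:- x, 1:] * (\<Prod>y\<in>A. [:- y, 1:]) = F * G"
      using insert.hyps by (auto elim: dvdE)
    have "poly F x * poly G x = 0"
      using arg_cong[OF G, of "\<lambda>P. poly P x"] by simp
    then obtain G' where "G = [:- x, 1:] * G'"
      using False by (auto simp: poly_eq_0_iff_dvd elim: dvdE)
    then have "[:- x, 1:] * (\<Prod>y\<in>A. [:- y, 1:]) = [:- x, 1:] * (F * G')"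
      using G by (simp add: mult.left_commute)
    then have "(\<Prod>y\<in>A. [:- y, 1:]) = F * G'"
      by (subst (asm) mult_left_cancel) simp_all
    then show ?thesis
      using insert.IH insert.prems(2) by auto
  qed auto
qed

locale field_embedding =
  fixes \<psi> :: "'b::field \<Rightarrow> 'a::field"
  assumes hom_add: "\<psi> (x + y) = \<psi> x + \<psi> y"
    and hom_mult: "\<psi> (x * y) = \<psi> x * \<psi> y"
    and hom_one: "\<psi> 1 = 1"
begin

lemma hom_zero: "\<psi> 0 = 0"
  using hom_add[of 0 0] by (metis add.right_neutral add_left_cancel)

lemma hom_diff: "\<psi> (x - y) = \<psi> x - \<psi> y"
  using hom_add[of "x - y" y] by (simp add: eq_diff_eq)

lemma hom_eq_0_iff: "\<psi> x = 0 \<longleftrightarrow> x = 0"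
  using hom_mult[of x "inverse x"] hom_one hom_zero by (cases "x = 0") auto

lemma hom_eq_iff: "\<psi> x = \<psi> y \<longleftrightarrow> x = y"
  using hom_eq_0_iff[of "x - y"] by (simp add: hom_diff)

lemma inj: "inj \<psi>"
  by (simp add: inj_def hom_eq_iff)

lemma hom_power: "\<psi> (x ^ n) = \<psi> x ^ n"
  by (induction n) (simp_all add: hom_one hom_mult)

lemma hom_sum: "\<psi> (\<Sum>i\<in>I. f i) = (\<Sum>i\<in>I. \<psi> (f i))"
  by (induction I rule: infinite_finite_induct) (simp_all add: hom_zero hom_add)

lemma hom_trace_pm: "\<psi> (trace_pm p m x) = trace_pm p m (\<psi> x)"
  by (simp add: trace_pm_def hom_sum hom_power)

end

lemma field_embedding_from_int_poly_eval:
  fixes \<zeta> :: "'b::field" and \<theta> :: "'a::field"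
  assumes ker: "\<And>P. poly (map_poly of_int P) \<zeta> = 0 \<Longrightarrow> poly (map_poly of_int P) \<theta> = 0"
    and gen: "\<And>y. \<exists>P. poly (map_poly of_int P) \<zeta> = y"
  obtains \<psi> where "field_embedding \<psi>"
    and "\<And>P. \<psi> (poly (map_poly of_int P) \<zeta>) = poly (map_poly of_int P) \<theta>"
proof -
  define ev\<zeta> where "ev\<zeta> P = poly (map_poly of_int P) \<zeta>" for P
  define ev\<theta> where "ev\<theta> P = poly (map_poly of_int P) \<theta>" for P
  define \<psi> where "\<psi> y = ev\<theta> (SOME P. ev\<zeta> P = y)" for y
  have \<psi>_ev: "\<psi> (ev\<zeta> P) = ev\<theta> P" for P
  proof -
    let ?Q = "SOME Q. ev\<zeta> Q = ev\<zeta> P"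
    have "ev\<zeta> ?Q = ev\<zeta> P"
      by (rule someI) (rule refl)
    then have "ev\<zeta> (?Q - P) = 0"
      by (simp add: ev\<zeta>_def map_poly_of_int_diff)
    then have "ev\<theta> (?Q - P) = 0"
      using ker by (simp add: ev\<zeta>_def ev\<theta>_def)
    then show ?thesis
      by (simp add: \<psi>_def ev\<theta>_def map_poly_of_int_diff)
  qed
  have "field_embedding \<psi>"
  proof
    fix x y
    obtain P Q where "ev\<zeta> P = x" "ev\<zeta> Q = y"
      using gen unfolding ev\<zeta>_def by metis
    then show "\<psi> (x + y) = \<psi> x + \<psi> y" "\<psi> (x * y) = \<psi> x * \<psi> y"
      using \<psi>_ev[of "P + Q"] \<psi>_ev[of "P * Q"] \<psi>_ev[of P] \<psi>_ev[of Q]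
      by (simp_all add: ev\<zeta>_def ev\<theta>_def map_poly_of_int_add map_poly_of_int_mult)
  next
    show "\<psi> 1 = 1"
      using \<psi>_ev[of 1] by (simp add: ev\<zeta>_def ev\<theta>_def)
  qed
  then show thesis
    using that \<psi>_ev by (simp add: ev\<zeta>_def ev\<theta>_def)
qed

lemma (in field_embedding) range_eq_fixed_points:
  assumes "card (UNIV :: 'b set) = n" "1 < n" and fixed: "\<And>y. \<psi> y ^ n = \<psi> y"
  shows "range \<psi> = {x. x ^ n = x}"
proof (rule card_seteq)
  show "finite {x :: 'a. x ^ n = x}"
    using finite_card_power_eq_power_le(1)[OF \<open>1 < n\<close>] by simp
  show "range \<psi> \<subseteq> {x. x ^ n = x}"
    using fixed by auto
  show "card {x :: 'a. x ^ n = x} \<le> card (range \<psi>)"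
    using finite_card_power_eq_power_le(2)[OF \<open>1 < n\<close>, where 'a = 'a] card_image[OF inj] assms(1)
    by simp
qed

lemma int_poly_eval_surj_primitive_elem:
  fixes \<omega> :: "'F::field"
  assumes "primitive_elem \<omega>"
  shows "\<exists>P. poly (map_poly of_int P) \<omega> = y"
proof (cases "y = 0")
  case True
  then show ?thesis
    by (intro exI[of _ 0]) simp
next
  case False
  then obtain i where "y = \<omega> ^ i"
    using assms by (auto simp: primitive_elem_def)
  then show ?thesis
    by (intro exI[of _ "monom 1 i"]) (simp add: map_poly_monom poly_monom)
qed

text \<open>Take a monic integer polynomial \<open>f\<close> of degree \<open>a\<close> with root \<open>\<omega>\<close>. Modulo \<open>p\<close> it divides every
  integer polynomial vanishing at \<open>\<omega>\<close>: among them \<open>X ^ p ^ m - X\<close>, which splits in the big field,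
  and \<open>X ^ p ^ a - X\<close>. A root \<open>\<theta>\<close> of \<open>f\<close> there does the job.\<close>
lemma exists_fixed_root_of_int_polys:
  fixes \<omega> :: "'b::{finite,field}"
  assumes "prime p" "0 < a" "card (UNIV :: 'b set) = p ^ a" "primitive_elem \<omega>"
    and card_a: "card (UNIV :: 'a set) = p ^ m" and "a dvd m"
  obtains \<theta> :: "'a::{finite,field}" where "\<theta> ^ (p ^ a) = \<theta>"
    and "\<And>P. poly (map_poly of_int P) \<omega> = 0 \<Longrightarrow> poly (map_poly of_int P) \<theta> = 0"
proof -
  have char: "CHAR('a) = p"
    using \<open>prime p\<close> card_a by (rule CHAR_finite_field)
  obtain f where f: "degree f = a" "lead_coeff f = 1" "poly (map_poly of_int f) \<omega> = 0"
    using assms(1-4) by (rule exists_monic_int_poly_root)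
  let ?F = "map_poly (of_int :: int \<Rightarrow> 'a) f"
  have dvd: "?F dvd map_poly of_int P" if "poly (map_poly of_int P) \<omega> = 0" for P
    using assms(1,3,4) f char that by (rule map_poly_of_int_dvd_if_root)
  have "\<omega> ^ (p ^ a) = \<omega>"
    using finite_field_power_card[of \<omega>] assms(3) by simp
  then have "\<omega> ^ (p ^ (a * k)) = \<omega>" for k
    using power_power_fixed[of \<omega> "p ^ a" k] by (simp only: power_mult)
  then have X_power_minus_X: "poly (map_poly of_int (monom 1 (p ^ (a * k)) - monom 1 1)) \<omega> = 0" for k
    by (simp add: map_poly_of_int_diff map_poly_monom poly_monom)
  obtain k where "m = a * k"
    using \<open>a dvd m\<close> ..
  have "?F dvd map_poly of_int (monom 1 (p ^ m) - monom 1 1)"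
    using dvd X_power_minus_X \<open>m = a * k\<close> by blast
  also have "map_poly of_int (monom 1 (p ^ m) - monom 1 1) =
      (monom 1 (card (UNIV :: 'a set)) - monom 1 1 :: 'a poly)"
    by (simp add: card_a map_poly_of_int_diff map_poly_monom)
  also have "\<dots> = (\<Prod>x\<in>UNIV. [:- x, 1:])"
    by (rule X_power_card_minus_X_eq_prod)
  finally have "?F dvd (\<Prod>x\<in>UNIV. [:- x, 1:])" .
  moreover have "degree ?F = a"
    using f by (subst map_poly_degree_eq) auto
  ultimately obtain \<theta> where \<theta>: "poly ?F \<theta> = 0"
    using dvd_prod_linear_factors_imp_root[of UNIV ?F] \<open>0 < a\<close> by auto
  have ker: "poly (map_poly of_int P) \<theta> = 0" if "poly (map_poly of_int P) \<omega> = 0" for P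
    using dvd[OF that] \<theta> by (auto elim: dvdE)
  have "\<theta> ^ (p ^ a) = \<theta>"
    using ker[OF X_power_minus_X[of 1]] by (simp add: map_poly_of_int_diff map_poly_monom poly_monom)
  then show thesis
    using ker by (rule that)
qed

lemma finite_field_embedding:
  fixes \<omega> :: "'b::{finite,field}"
  assumes "prime p" "0 < a" "card (UNIV :: 'b set) = p ^ a" "primitive_elem \<omega>"
    and card_a: "card (UNIV :: 'a set) = p ^ m" and "a dvd m"
  obtains \<psi> :: "'b \<Rightarrow> 'a::{finite,field}" where "field_embedding \<psi>" "range \<psi> = {x. x ^ (p ^ a) = x}"
proof -
  obtain \<theta> :: 'a where \<theta>: "\<theta> ^ (p ^ a) = \<theta>"
    and ker: "\<And>P. poly (map_poly of_int P) \<omega> = 0 \<Longrightarrow> poly (map_poly of_int P) \<theta> = 0"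
    using exists_fixed_root_of_int_polys[OF assms] by blast
  note gen = int_poly_eval_surj_primitive_elem[OF \<open>primitive_elem \<omega>\<close>]
  obtain \<psi> :: "'b \<Rightarrow> 'a" where \<psi>: "field_embedding \<psi>"
    and \<psi>_ev: "\<And>P. \<psi> (poly (map_poly of_int P) \<omega>) = poly (map_poly of_int P) \<theta>"
    using field_embedding_from_int_poly_eval[OF ker gen] by blast
  have "\<psi> y ^ (p ^ a) = \<psi> y" for y
  proof -
    obtain P where P: "y = poly (map_poly of_int P) \<omega>"
      using gen by metis
    have "CHAR('a) = p"
      using \<open>prime p\<close> card_a by (rule CHAR_finite_field)
    then have "poly (map_poly (of_int :: int \<Rightarrow> 'a) P) (\<theta> ^ (p ^ a)) = poly (map_poly of_int P) \<theta> ^ (p ^ a)"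
      using \<open>prime p\<close> of_int_power_CHAR_power[where 'a = 'a]
      by (intro poly_power_CHAR_power) (auto simp: coeff_map_poly)
    then show ?thesis
      using P \<psi>_ev \<theta> by simp
  qed
  moreover have "1 < p ^ a"
    using assms prime_gt_1_nat by (intro one_less_power) auto
  ultimately have "range \<psi> = {x. x ^ (p ^ a) = x}"
    using field_embedding.range_eq_fixed_points[OF \<psi> assms(3)] by blast
  with \<psi> show thesis
    by (rule that)
qed

subsection \<open>The relative trace\<close>

text \<open>On \<open>GF(p ^ (e * d))\<close> this is the trace over the subfield \<open>GF(p ^ e)\<close>.\<close>
definition rel_trace :: "nat \<Rightarrow> nat \<Rightarrow> nat \<Rightarrow> 'a::comm_ring_1 \<Rightarrow> 'a" where
  "rel_trace p e d x = (\<Sum>l<d. x ^ (p ^ (e * l)))"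

lemma rel_trace_add:
  fixes x y :: "'a::comm_ring_1"
  assumes "CHAR('a) = p" "prime p"
  shows "rel_trace p e d (x + y) = rel_trace p e d x + rel_trace p e d y"
  using assms by (simp add: rel_trace_def freshmans_dream' sum.distrib)

lemma rel_trace_zero:
  assumes "0 < p"
  shows "rel_trace p e d (0 :: 'a::comm_ring_1) = 0"
  using assms by (simp add: rel_trace_def power_0_left)

lemma rel_trace_diff:
  fixes x y :: "'a::comm_ring_1"
  assumes "CHAR('a) = p" "prime p"
  shows "rel_trace p e d (x - y) = rel_trace p e d x - rel_trace p e d y"
  using rel_trace_add[OF assms, where x = "x - y" and y = y] by (simp add: eq_diff_eq)

lemma rel_trace_sum:
  fixes f :: "'b \<Rightarrow> 'a::comm_ring_1"
  assumes "CHAR('a) = p" "prime p"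
  shows "rel_trace p e d (\<Sum>i\<in>I. f i) = (\<Sum>i\<in>I. rel_trace p e d (f i))"
  by (induction I rule: infinite_finite_induct)
     (use assms prime_gt_0_nat in \<open>simp_all add: rel_trace_zero rel_trace_add\<close>)

lemma rel_trace_scale:
  fixes x y :: "'a::comm_ring_1"
  assumes "y ^ (p ^ e) = y"
  shows "rel_trace p e d (y * x) = y * rel_trace p e d x"
proof -
  have "y ^ (p ^ (e * l)) = y" for l
    using power_power_fixed[of y "p ^ e" l, OF assms] by (simp add: power_mult)
  then show ?thesis
    by (simp add: rel_trace_def power_mult_distrib sum_distrib_left)
qed

lemma rel_trace_fixed:
  fixes x :: "'a::comm_ring_1"
  assumes "CHAR('a) = p" "prime p" "0 < d" and "x ^ (p ^ (e * d)) = x"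
  shows "rel_trace p e d x ^ (p ^ e) = rel_trace p e d x"
proof -
  define f where "f l = x ^ (p ^ (e * l))" for l
  obtain d' where d: "d = Suc d'"
    using \<open>0 < d\<close> by (cases d) auto
  have "rel_trace p e d x ^ (p ^ e) = (\<Sum>l<d. f l ^ (p ^ e))"
    unfolding rel_trace_def f_def using assms(1,2) by (intro freshmans_dream_sum') auto
  also have "\<dots> = (\<Sum>l<d. f (Suc l))"
    by (simp add: f_def power_add mult.commute flip: power_mult)
  also have "\<dots> = f d + (\<Sum>l<d'. f (Suc l))"
    by (simp add: d)
  also have "f d = f 0"
    using assms(4) by (simp add: f_def)
  also have "f 0 + (\<Sum>l<d'. f (Suc l)) = (\<Sum>l<d. f l)"
    unfolding d sum.lessThan_Suc_shift ..
  finally show ?thesis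
    by (simp add: rel_trace_def f_def)
qed

lemma add_mult_less_mult:
  fixes j t b c :: nat
  assumes "j < b" "t < c"
  shows "j + b * t < b * c"
proof -
  have "j + b * t < b * (t + 1)"
    using assms by simp
  also have "\<dots> \<le> b * c"
    using assms by (intro mult_le_mono2) simp
  finally show ?thesis .
qed

lemma trace_pm_rel_trace:
  fixes x :: "'a::field"
  assumes "CHAR('a) = p" "prime p" "0 < e"
  shows "trace_pm p (e * d) x = trace_pm p e (rel_trace p e d x)"
proof -
  have "trace_pm p e (rel_trace p e d x) = (\<Sum>i<e. \<Sum>l<d. x ^ (p ^ (e * l + i)))"
    unfolding trace_pm_def rel_trace_def using assms
    by (simp add: freshmans_dream_sum' power_add flip: power_mult)
  also have "\<dots> = (\<Sum>(i, l)\<in>{..<e} \<times> {..<d}. x ^ (p ^ (e * l + i)))"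
    by (rule sum.cartesian_product)
  also have "\<dots> = (\<Sum>j<e * d. x ^ (p ^ j))"
  proof -
    have "e * l + i < e * d" if "i < e" "l < d" for i l
      using add_mult_less_mult[OF that] by (simp add: add.commute)
    moreover have "j div e < d" if "j < e * d" for j
      using that by (simp add: less_mult_imp_div_less mult.commute)
    ultimately show ?thesis
      by (intro sum.reindex_bij_witness[of _ "\<lambda>j. (j mod e, j div e)" "\<lambda>(i, l). e * l + i"])
         (use \<open>0 < e\<close> in auto)
  qed
  finally show ?thesis
    by (simp add: trace_pm_def)
qed

text \<open>As a polynomial, \<open>rel_trace p e d\<close> is nonzero of degree \<open>p ^ (e * (d - 1)) < p ^ (e * d)\<close>.\<close>
lemma rel_trace_not_identically_zero:
  assumes "prime p" "0 < e" "0 < d" and card: "card (UNIV :: 'a set) = p ^ (e * d)"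
  obtains y :: "'a::{finite,field}" where "rel_trace p e d y \<noteq> 0"
proof -
  define Q :: "'a poly" where "Q = (\<Sum>l<d. monom 1 (p ^ (e * l)))"
  have poly_Q: "poly Q y = rel_trace p e d y" for y
    by (simp add: Q_def rel_trace_def poly_sum poly_monom)
  have coeff_Q: "coeff Q n = (\<Sum>l<d. if p ^ (e * l) = n then 1 else 0)" for n
    by (simp add: Q_def coeff_sum coeff_monom)
  have "1 < p"
    using assms(1) by (rule prime_gt_1_nat)
  have "p ^ (e * l) = 1 \<longleftrightarrow> l = 0" for l
    using \<open>1 < p\<close> \<open>0 < e\<close> by (simp add: power_eq_1_iff)
  then have "coeff Q 1 = 1"
    using \<open>0 < d\<close> by (simp add: coeff_Q eq_commute[of "p ^ _" 1] sum.delta')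
  then have "Q \<noteq> 0"
    by (metis coeff_0 zero_neq_one)
  have less: "p ^ (e * l) < p ^ (e * d)" if "l < d" for l
    using that \<open>1 < p\<close> \<open>0 < e\<close> by (intro power_strict_increasing) auto
  have "coeff Q n = 0" if "p ^ (e * d) \<le> n" for n
    unfolding coeff_Q using that less by (intro sum.neutral) fastforce
  then have "degree Q < p ^ (e * d)"
    using \<open>Q \<noteq> 0\<close> by (intro degree_lessI) auto
  moreover have "card {y. poly Q y = 0} \<le> degree Q"
    by (rule card_poly_roots_bound[OF \<open>Q \<noteq> 0\<close>])
  ultimately have "{y. poly Q y = 0} \<noteq> UNIV"
    using card by auto
  then show thesis
    using that poly_Q by auto
qed

subsection \<open>Trace coordinates with respect to a power basis\<close>

locale power_basis =
  fixes p e d :: nat and g :: "'a::{finite,field}"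
  assumes prime: "prime p" and e_pos: "0 < e" and d_pos: "0 < d"
    and card_UNIV: "card (UNIV :: 'a set) = p ^ (e * d)"
    and card_subfield: "card {y :: 'a. y ^ (p ^ e) = y} = p ^ e"
    and conjugates_inj: "inj_on (\<lambda>i. g ^ (p ^ (e * i))) {..<d}"
begin

abbreviation subfield :: "'a set" where
  "subfield \<equiv> {y. y ^ (p ^ e) = y}"

definition vectors :: "'a list set" where
  "vectors = {xs. set xs \<subseteq> subfield \<and> length xs = d}"

definition lin_comb :: "'a list \<Rightarrow> 'a" where
  "lin_comb xs = (\<Sum>j<d. xs ! j * g ^ j)"

definition trace_coords :: "'a \<Rightarrow> 'a list" where
  "trace_coords x = map (\<lambda>j. rel_trace p e d (x * g ^ j)) [0..<d]"

lemma char: "CHAR('a) = p"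
  using prime card_UNIV by (rule CHAR_finite_field)

lemma subfield_diff:
  assumes "x \<in> subfield" "y \<in> subfield"
  shows "x - y \<in> subfield"
proof -
  have "(x - y) ^ (p ^ e) + y ^ (p ^ e) = x ^ (p ^ e)"
    using char prime freshmans_dream'[where x = "x - y" and y = y] by simp
  then show ?thesis
    using assms by (simp add: eq_diff_eq)
qed

lemma finite_vectors: "finite vectors"
  by (simp add: vectors_def finite_lists_length_eq)

lemma card_vectors: "card vectors = card (UNIV :: 'a set)"
  using card_subfield card_UNIV
  by (simp add: vectors_def card_lists_length_eq power_mult)

lemma inj_on_lin_comb: "inj_on lin_comb vectors"
proof (rule inj_onI)
  fix xs ys
  assume xs: "xs \<in> vectors" and ys: "ys \<in> vectors" and "lin_comb xs = lin_comb ys"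
  define Q where "Q = (\<Sum>j<d. monom (xs ! j - ys ! j) j)"
  have coeff_Q: "coeff Q j = (if j < d then xs ! j - ys ! j else 0)" for j
    unfolding Q_def by (rule coeff_sum_monom)
  have "xs ! j - ys ! j \<in> subfield" if "j < d" for j
    using xs ys that by (intro subfield_diff) (force simp: vectors_def)+
  then have "coeff Q j ^ (p ^ e) = coeff Q j" for j
    using prime prime_gt_0_nat by (cases "j < d") (auto simp: coeff_Q power_0_left)
  then have "Q = 0"
  proof (rule poly_eq_0_if_distinct_conjugate_roots[OF char prime])
    show "degree Q < d"
      unfolding Q_def using d_pos by (rule degree_sum_monom_less)
    show "poly Q g = 0"
      using \<open>lin_comb xs = lin_comb ys\<close>
      by (simp add: Q_def lin_comb_def poly_sum poly_monom left_diff_distrib sum_subtractf)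
  qed (rule conjugates_inj)
  then have "xs ! j = ys ! j" if "j < d" for j
    using coeff_Q[of j] that by simp
  then show "xs = ys"
    using xs ys by (intro nth_equalityI) (auto simp: vectors_def)
qed

lemma lin_comb_surj: "lin_comb ` vectors = UNIV"
  using card_image[OF inj_on_lin_comb] card_vectors by (intro card_subset_eq) auto

text \<open>Nondegeneracy of the trace form: for \<open>\<delta> \<noteq> 0\<close> every element is \<open>\<delta>\<close> times a combination of the
  \<open>g ^ j\<close> with coefficients in the subfield, so \<open>rel_trace\<close> would vanish identically.\<close>
lemma eq_0_if_rel_trace_dual_eq_0:
  assumes "\<And>j. j < d \<Longrightarrow> rel_trace p e d (\<delta> * g ^ j) = 0"
  shows "\<delta> = 0"
proof (rule ccontr)
  assume "\<delta> \<noteq> 0"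
  obtain y :: 'a where y: "rel_trace p e d y \<noteq> 0"
    using rel_trace_not_identically_zero[OF prime e_pos d_pos card_UNIV] by blast
  obtain xs where xs: "xs \<in> vectors" "lin_comb xs = y / \<delta>"
    using lin_comb_surj by (metis UNIV_I imageE)
  have "y = \<delta> * lin_comb xs"
    using xs(2) \<open>\<delta> \<noteq> 0\<close> by simp
  also have "\<dots> = (\<Sum>j<d. xs ! j * (\<delta> * g ^ j))"
    by (simp add: lin_comb_def sum_distrib_left mult.left_commute)
  finally have "rel_trace p e d y = (\<Sum>j<d. rel_trace p e d (xs ! j * (\<delta> * g ^ j)))"
    by (simp add: rel_trace_sum[OF char prime])
  also have "\<dots> = (\<Sum>j<d. xs ! j * rel_trace p e d (\<delta> * g ^ j))"
  proof (rule sum.cong)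
    fix j
    assume "j \<in> {..<d}"
    then have "xs ! j \<in> set xs"
      using xs(1) by (simp add: vectors_def)
    then have "xs ! j \<in> subfield"
      using xs(1) by (auto simp: vectors_def)
    then show "rel_trace p e d (xs ! j * (\<delta> * g ^ j)) = xs ! j * rel_trace p e d (\<delta> * g ^ j)"
      by (simp add: rel_trace_scale)
  qed simp
  also have "\<dots> = 0"
    using assms by simp
  finally show False
    using y by contradiction
qed

lemma bij_trace_coords: "bij_betw trace_coords UNIV vectors"
proof -
  have "inj trace_coords"
  proof (rule injI)
    fix x y
    assume "trace_coords x = trace_coords y"
    then have "rel_trace p e d ((x - y) * g ^ j) = 0" if "j < d" for j
      using arg_cong[of _ _ "\<lambda>xs. xs ! j", OF \<open>trace_coords x = trace_coords y\<close>] that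
      by (simp add: trace_coords_def left_diff_distrib rel_trace_diff[OF char prime])
    then show "x = y"
      using eq_0_if_rel_trace_dual_eq_0 by force
  qed
  moreover have "range trace_coords \<subseteq> vectors"
  proof -
    have "x ^ (p ^ (e * d)) = x" for x :: 'a
      using finite_field_power_card[of x] card_UNIV by simp
    then show ?thesis
      using rel_trace_fixed[OF char prime d_pos] by (auto simp: trace_coords_def vectors_def)
  qed
  moreover have "card (range trace_coords) = card vectors"
    using card_image[OF \<open>inj trace_coords\<close>] card_vectors by simp
  ultimately have "range trace_coords = vectors"
    using finite_vectors by (intro card_subset_eq)
  with \<open>inj trace_coords\<close> show ?thesis
    by (simp add: bij_betw_def)
qed

end

subsection \<open>Counting lists by total weight\<close>

lemma bij_betw_map_lists_length:
  assumes "inj f"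
  shows "bij_betw (map f) {ys. length ys = n} {xs. set xs \<subseteq> range f \<and> length xs = n}"
proof (rule bij_betw_imageI)
  show "inj_on (map f) {ys. length ys = n}"
    using assms by (auto simp: inj_on_def inj_map_eq_map)
  show "map f ` {ys. length ys = n} = {xs. set xs \<subseteq> range f \<and> length xs = n}"
  proof (intro equalityI subsetI)
    fix xs
    assume xs: "xs \<in> {xs. set xs \<subseteq> range f \<and> length xs = n}"
    then have "f (inv f x) = x" if "x \<in> set xs" for x
      using that by (auto intro: f_inv_into_f)
    then have "map f (map (inv f) xs) = xs"
      unfolding map_map by (intro map_idI) simp
    then show "xs \<in> map f ` {ys. length ys = n}"
      using xs by (metis (mono_tags, lifting) image_eqI length_map mem_Collect_eq)
  qed auto
qed

lemma prod_list_map_eq_prod_count: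
  fixes f :: "'a \<Rightarrow> 'b::comm_monoid_mult"
  assumes "finite W" "set xs \<subseteq> W"
  shows "prod_list (map f xs) = (\<Prod>x\<in>W. f x ^ count_list xs x)"
  using assms(2)
proof (induction xs)
  case (Cons y xs)
  have "(\<Prod>x\<in>W. f x ^ count_list (y # xs) x) = (\<Prod>x\<in>W. (if x = y then f x else 1) * f x ^ count_list xs x)"
    by (rule prod.cong) auto
  also have "\<dots> = f y * (\<Prod>x\<in>W. f x ^ count_list xs x)"
    using assms(1) Cons.prems by (simp add: prod.distrib prod.delta)
  finally show ?case
    using Cons by simp
qed simp

lemma card_lists_map_eq:
  fixes f :: "'c::finite \<Rightarrow> 'd"
  shows "card {ys. map f ys = ws} = prod_list (map (\<lambda>v. card {x. f x = v}) ws)"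
proof (induction ws)
  case (Cons v ws)
  have "{ys. map f ys = v # ws} = (\<lambda>(x, ys). x # ys) ` ({x. f x = v} \<times> {ys. map f ys = ws})"
    by (auto simp: map_eq_Cons_conv)
  moreover have "inj_on (\<lambda>(x, ys). x # ys) ({x. f x = v} \<times> {ys. map f ys = ws})"
    by (auto simp: inj_on_def)
  ultimately show ?case
    using Cons by (simp add: card_image card_cartesian_product)
qed simp

lemma card_lists_mset_map_eq:
  fixes f :: "'c::finite \<Rightarrow> 'd"
  shows "card {ys. mset (map f ys) = M} =
    card (permutations_of_multiset M) * (\<Prod>v\<in>set_mset M. card {x. f x = v} ^ count M v)"
proof -
  have "{ys. mset (map f ys) = M} = (\<Union>ws\<in>permutations_of_multiset M. {ys. map f ys = ws})"
    by (auto simp: permutations_of_multiset_def)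
  moreover have "finite {ys. map f ys = ws}" for ws
    using finite_lists_length_eq[of "UNIV :: 'c set" "length ws"]
    by (rule finite_subset[rotated]) auto
  ultimately have "card {ys. mset (map f ys) = M} =
      (\<Sum>ws\<in>permutations_of_multiset M. card {ys. map f ys = ws})"
    by (simp add: card_UN_disjoint disjoint_iff)
  also have "\<dots> = (\<Sum>ws\<in>permutations_of_multiset M. \<Prod>v\<in>set_mset M. card {x. f x = v} ^ count M v)"
  proof (rule sum.cong)
    fix ws
    assume "ws \<in> permutations_of_multiset M"
    then have "mset ws = M"
      by (rule permutations_of_multisetD)
    have "card {ys. map f ys = ws} = (\<Prod>v\<in>set_mset M. card {x. f x = v} ^ count_list ws v)"
      unfolding card_lists_map_eq using \<open>mset ws = M\<close> by (intro prod_list_map_eq_prod_count) auto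
    also have "\<dots> = (\<Prod>v\<in>set_mset M. card {x. f x = v} ^ count M v)"
      by (simp add: count_mset flip: \<open>mset ws = M\<close>)
    finally show "card {ys. map f ys = ws} = (\<Prod>v\<in>set_mset M. card {x. f x = v} ^ count M v)" .
  qed simp
  finally show ?thesis
    by simp
qed

lemma card_lists_count_eq:
  fixes f :: "'c::finite \<Rightarrow> 'd"
  assumes "finite W" "range f \<subseteq> W" and "sum l W = b"
  shows "card {ys. length ys = b \<and> (\<forall>v\<in>W. count (mset (map f ys)) v = l v)} =
    multinom b l W * (\<Prod>v\<in>W. card {x. f x = v} ^ l v)"
proof -
  define M where "M = (\<Sum>v\<in>W. replicate_mset (l v) v)"
  have count_M: "count M v = (if v \<in> W then l v else 0)" for v
    using assms(1) by (simp add: M_def count_sum)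
  then have set_M: "set_mset M \<subseteq> W"
    by (metis count_eq_zero_iff not_gr_zero subsetI)
  have "size M = sum (count M) (set_mset M)"
    by (rule size_multiset_overloaded_eq)
  also have "\<dots> = sum (count M) W"
    using set_M assms(1) by (intro sum.mono_neutral_left) (auto simp: not_in_iff)
  finally have size_M: "size M = b"
    using count_M assms(3) by simp
  have outside: "count (mset (map f ys)) v = 0" if "v \<notin> W" for ys v
    using that assms(2) by (auto simp: count_eq_zero_iff)
  have eq: "{ys. length ys = b \<and> (\<forall>v\<in>W. count (mset (map f ys)) v = l v)} = {ys. mset (map f ys) = M}"
  proof (intro Collect_cong iffI)
    fix ys
    assume "length ys = b \<and> (\<forall>v\<in>W. count (mset (map f ys)) v = l v)"
    then show "mset (map f ys) = M"
      using outside count_M by (intro multiset_eqI) auto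
  next
    fix ys
    assume ys: "mset (map f ys) = M"
    then have "length ys = b"
      using size_M by (metis length_map size_mset)
    then show "length ys = b \<and> (\<forall>v\<in>W. count (mset (map f ys)) v = l v)"
      using ys count_M by simp
  qed
  have "card {ys. length ys = b \<and> (\<forall>v\<in>W. count (mset (map f ys)) v = l v)} =
      card (permutations_of_multiset M) * (\<Prod>v\<in>set_mset M. card {x. f x = v} ^ count M v)"
    unfolding eq by (rule card_lists_mset_map_eq)
  also have "card (permutations_of_multiset M) = multinom b l W"
  proof -
    have "(\<Prod>v\<in>set_mset M. fact (count M v)) = (\<Prod>v\<in>W. fact (l v) :: nat)"
      using set_M assms(1) count_M by (intro prod.mono_neutral_cong_left) (auto simp: not_in_iff)
    then show ?thesis
      by (simp add: card_permutations_of_multiset(1) size_M multinom_def)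
  qed
  also have "(\<Prod>v\<in>set_mset M. card {x. f x = v} ^ count M v) = (\<Prod>v\<in>W. card {x. f x = v} ^ l v)"
    using set_M assms(1) count_M by (intro prod.mono_neutral_cong_left) (auto simp: not_in_iff)
  finally show ?thesis .
qed

lemma length_sum_list_eq_sum_count:
  fixes xs :: "nat list"
  assumes "finite W" "set xs \<subseteq> W"
  shows "length xs = (\<Sum>v\<in>W. count (mset xs) v)"
    and "sum_list xs = (\<Sum>v\<in>W. count (mset xs) v * v)"
proof -
  have "length xs = sum_list (map (\<lambda>_. 1) xs)"
    by (induction xs) auto
  also have "\<dots> = (\<Sum>v\<in>W. count_list xs v * 1)"
    using assms(2,1) by (rule sum_list_map_eq_sum_count2)
  finally show "length xs = (\<Sum>v\<in>W. count (mset xs) v)"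
    by (simp only: count_mset mult_1_right)
  have "sum_list xs = sum_list (map (\<lambda>v. v) xs)"
    by simp
  also have "\<dots> = (\<Sum>v\<in>W. count_list xs v * v)"
    using assms(2,1) by (rule sum_list_map_eq_sum_count2)
  finally show "sum_list xs = (\<Sum>v\<in>W. count (mset xs) v * v)"
    by (simp only: count_mset)
qed

lemma lists_weight_eq_UN_count_classes:
  fixes f :: "'c::finite \<Rightarrow> nat"
  shows "{ys. length ys = b \<and> sum_list (map f ys) = w} =
    (\<Union>l \<in> {l \<in> PiE (range f) (\<lambda>_. {0..b}). sum l (range f) = b \<and> (\<Sum>v\<in>range f. l v * v) = w}.
      {ys. length ys = b \<and> (\<forall>v\<in>range f. count (mset (map f ys)) v = l v)})"
    (is "?A = (\<Union>l\<in>?LS. ?Y l)")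
proof (intro equalityI subsetI)
  have counts: "length ys = (\<Sum>v\<in>range f. count (mset (map f ys)) v)"
    "sum_list (map f ys) = (\<Sum>v\<in>range f. count (mset (map f ys)) v * v)" for ys
    using length_sum_list_eq_sum_count[of "range f" "map f ys"] by auto
  fix ys
  {
    assume ys: "ys \<in> ?A"
    define l where "l = restrict (\<lambda>v. count (mset (map f ys)) v) (range f)"
    have "count (mset (map f ys)) v \<le> b" for v
      using count_le_size[of "mset (map f ys)" v] ys by simp
    then have "l \<in> ?LS"
      using ys counts[of ys] by (auto simp: l_def)
    moreover have "ys \<in> ?Y l"
      using ys by (simp add: l_def)
    ultimately show "ys \<in> (\<Union>l\<in>?LS. ?Y l)"
      by blast
  next
    assume "ys \<in> (\<Union>l\<in>?LS. ?Y l)"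
    then obtain l where l: "l \<in> ?LS" and "length ys = b"
      and "\<forall>v\<in>range f. count (mset (map f ys)) v = l v"
      by blast
    then have "sum_list (map f ys) = (\<Sum>v\<in>range f. l v * v)"
      unfolding counts by (intro sum.cong) auto
    then show "ys \<in> ?A"
      using l \<open>length ys = b\<close> by simp
  }
qed

lemma card_lists_weight_eq_multinomial_sum:
  fixes f :: "'c::finite \<Rightarrow> nat"
  shows "card {ys. length ys = b \<and> sum_list (map f ys) = w} =
    (\<Sum>l \<in> {l \<in> PiE (range f) (\<lambda>_. {0..b}). sum l (range f) = b \<and> (\<Sum>v\<in>range f. l v * v) = w}.
      multinom b l (range f) * (\<Prod>v\<in>range f. card {x. f x = v} ^ l v))"
proof -
  let ?W = "range f"
  define LS where "LS = {l \<in> PiE ?W (\<lambda>_. {0..b}). sum l ?W = b \<and> (\<Sum>v\<in>?W. l v * v) = w}"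
  define Y where "Y l = {ys. length ys = b \<and> (\<forall>v\<in>?W. count (mset (map f ys)) v = l v)}" for l
  have "finite LS"
    by (rule finite_subset[of _ "PiE ?W (\<lambda>_. {0..b})"]) (auto simp: LS_def intro: finite_PiE)
  moreover have "finite (Y l)" for l
    using finite_lists_length_eq[of "UNIV :: 'c set" b] by (rule finite_subset[rotated]) (auto simp: Y_def)
  moreover have "Y l \<inter> Y l' = {}" if "l \<in> LS" "l' \<in> LS" "l \<noteq> l'" for l l'
  proof -
    have l: "l \<in> PiE ?W (\<lambda>_. {0..b})" and l': "l' \<in> PiE ?W (\<lambda>_. {0..b})"
      using that(1,2) by (auto simp: LS_def)
    obtain v where "v \<in> ?W" "l v \<noteq> l' v"
      using PiE_ext[OF l l'] \<open>l \<noteq> l'\<close> by metis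
    then show ?thesis
      by (auto simp: Y_def)
  qed
  ultimately have "card {ys. length ys = b \<and> sum_list (map f ys) = w} = (\<Sum>l\<in>LS. card (Y l))"
    unfolding lists_weight_eq_UN_count_classes LS_def[symmetric] Y_def[symmetric]
    by (simp add: card_UN_disjoint)
  also have "\<dots> = (\<Sum>l\<in>LS. multinom b l ?W * (\<Prod>v\<in>?W. card {x. f x = v} ^ l v))"
  proof (rule sum.cong[OF refl])
    fix l
    assume "l \<in> LS"
    then show "card (Y l) = multinom b l ?W * (\<Prod>v\<in>?W. card {x. f x = v} ^ l v)"
      unfolding Y_def by (intro card_lists_count_eq) (auto simp: LS_def)
  qed
  finally show ?thesis
    by (simp add: LS_def)
qed

subsection \<open>Weights via roots of unity\<close>

lemma card_less_mult_eq_sum: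
  fixes b c :: nat
  shows "card {i. i < b * c \<and> P i} = (\<Sum>j<b. card {t. t < c \<and> P (j + b * t)})"
proof -
  have "bij_betw (\<lambda>i. (i mod b, i div b)) {i. i < b * c \<and> P i} (SIGMA j:{..<b}. {t. t < c \<and> P (j + b * t)})"
  proof (rule bij_betw_byWitness[where f' = "\<lambda>(j, t). j + b * t"])
    have "i mod b < b" "i div b < c" if "i < b * c" for i
    proof -
      have "0 < b"
        using that by (cases b) auto
      then show "i mod b < b"
        by simp
      show "i div b < c"
        using that by (intro less_mult_imp_div_less) (simp add: mult.commute)
    qed
    then show "(\<lambda>i. (i mod b, i div b)) ` {i. i < b * c \<and> P i} \<subseteq> (SIGMA j:{..<b}. {t. t < c \<and> P (j + b * t)})"
      by auto
  qed (auto simp: add_mult_less_mult)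
  then show ?thesis
    by (simp add: bij_betw_same_card)
qed

lemma card_filter_powers_eq:
  fixes x :: "'F::field"
  assumes "0 < N" and "\<And>i. x ^ i = 1 \<longleftrightarrow> N dvd i"
  shows "card {t. t < N \<and> P (x ^ t)} = card {y. y ^ N = 1 \<and> P y}"
  using bij_betw_card_filter[OF bij_betw_powers_roots_of_unity[OF assms], of P] by simp

definition root_weight :: "nat \<Rightarrow> nat \<Rightarrow> nat \<Rightarrow> 'a::field \<Rightarrow> nat" where
  "root_weight p m c y = card {z. z ^ c = 1 \<and> trace_pm p m (y * z) \<noteq> 0}"

lemma root_weight_eq_card_powers:
  fixes x :: "'F::field"
  assumes "0 < c" and "\<And>i. x ^ i = 1 \<longleftrightarrow> c dvd i"
  shows "root_weight p m c y = card {t. t < c \<and> trace_pm p m (y * x ^ t) \<noteq> 0}"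
  unfolding root_weight_def
  using card_filter_powers_eq[OF assms, of "\<lambda>z. trace_pm p m (y * z) \<noteq> 0"] by simp

lemma primitive_elem_power_order:
  fixes \<omega> :: "'F::{finite,field}"
  assumes "primitive_elem \<omega>" "card (UNIV :: 'F set) - 1 = u * c" "0 < u"
  shows "(\<omega> ^ u) ^ i = 1 \<longleftrightarrow> c dvd i"
  using primitive_elem_power_eq_1_iff[OF assms(1), of "u * i"] assms(2,3) by (simp add: power_mult)

lemma cweight_eq_root_weight:
  fixes \<omega> :: "'F::{finite,field}"
  assumes "primitive_elem \<omega>" "card (UNIV :: 'F set) = p ^ m" and "p ^ m - 1 = u * c"
  shows "cweight p m u \<omega> \<beta> = root_weight p m c \<beta>"
proof -
  have "2 \<le> p ^ m"
    using card_UNIV_field_ge_2[where 'F = 'F] assms(2) by simp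
  then have "0 < u" "0 < c"
    using assms(3) by (auto intro!: Nat.gr0I)
  have "(\<omega> ^ u) ^ i = 1 \<longleftrightarrow> c dvd i" for i
    using assms \<open>0 < u\<close> by (intro primitive_elem_power_order) auto
  then have "root_weight p m c \<beta> = card {i. i < c \<and> trace_pm p m (\<beta> * (\<omega> ^ u) ^ i) \<noteq> 0}"
    by (rule root_weight_eq_card_powers[OF \<open>0 < c\<close>])
  also have "\<dots> = cweight p m u \<omega> \<beta>"
    using assms(3) \<open>0 < u\<close> by (simp add: cweight_def power_mult)
  finally show ?thesis ..
qed

lemma (in field_embedding) root_weight_hom:
  fixes x :: 'b
  assumes "0 < c" and order: "\<And>i. x ^ i = 1 \<longleftrightarrow> c dvd i"
  shows "root_weight p m c (\<psi> y) = root_weight p m c y"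
proof -
  have "\<psi> x ^ i = 1 \<longleftrightarrow> c dvd i" for i
    using order[of i] hom_eq_iff[of "x ^ i" 1] by (simp add: hom_power hom_one)
  then have "root_weight p m c (\<psi> y) = card {t. t < c \<and> trace_pm p m (\<psi> y * \<psi> x ^ t) \<noteq> 0}"
    by (rule root_weight_eq_card_powers[OF \<open>0 < c\<close>])
  also have "\<dots> = card {t. t < c \<and> trace_pm p m (y * x ^ t) \<noteq> 0}"
    by (simp flip: hom_trace_pm hom_power hom_mult add: hom_eq_0_iff)
  also have "\<dots> = root_weight p m c y"
    using assms by (rule root_weight_eq_card_powers[symmetric])
  finally show ?thesis .
qed

subsection \<open>The code \<open>\<C>(k, p ^ (a * b))\<close> lifted from \<open>\<C>(u, p ^ a)\<close>\<close>

locale lifted_code =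
  fixes p a b c :: nat and \<omega> :: "'a::{finite,field}" and \<omega>0 :: "'b::{finite,field}"
  assumes prime: "prime p" and a_pos: "0 < a" and b_gt_1: "1 < b" and c_pos: "0 < c"
    and primitive_divisor_c: "primitive_divisor p a c"
    and primitive_divisor_n: "primitive_divisor p (a * b) (b * c)"
    and card_a: "card (UNIV :: 'a set) = p ^ (a * b)" and card_b: "card (UNIV :: 'b set) = p ^ a"
    and primitive: "primitive_elem \<omega>" and primitive0: "primitive_elem \<omega>0"
begin

definition k :: nat where
  "k = (p ^ (a * b) - 1) div (b * c)"

definition u :: nat where
  "u = (p ^ a - 1) div c"

definition g :: 'a where
  "g = \<omega> ^ k"

lemma p_power_ab_minus_1: "p ^ (a * b) - 1 = k * (b * c)"
  using primitive_divisor_n by (simp add: primitive_divisor_def k_def)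

lemma p_power_a_minus_1: "p ^ a - 1 = u * c"
  using primitive_divisor_c by (simp add: primitive_divisor_def u_def)

lemma u_pos: "0 < u"
proof -
  have "1 < p ^ a"
    using prime a_pos prime_gt_1_nat by (intro one_less_power) auto
  then show ?thesis
    using p_power_a_minus_1 by (cases u) auto
qed

lemma k_pos: "0 < k"
proof -
  have "1 < p ^ (a * b)"
    using prime a_pos b_gt_1 prime_gt_1_nat by (intro one_less_power) auto
  then show ?thesis
    using p_power_ab_minus_1 by (cases k) auto
qed

lemma g_power_eq_1_iff: "g ^ i = 1 \<longleftrightarrow> b * c dvd i"
proof -
  have "g ^ i = 1 \<longleftrightarrow> k * (b * c) dvd k * i"
    using primitive_elem_power_eq_1_iff[OF primitive, of "k * i"] card_a p_power_ab_minus_1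
    by (simp add: g_def power_mult)
  then show ?thesis
    using k_pos by simp
qed

lemma g_power_b_power_eq_1_iff: "(g ^ b) ^ t = 1 \<longleftrightarrow> c dvd t"
  using g_power_eq_1_iff[of "b * t"] b_gt_1 by (simp add: power_mult)

lemma g_power_b_fixed: "(g ^ b) ^ (p ^ a) = g ^ b"
proof -
  have "(g ^ b) ^ (p ^ a - 1) = 1"
    using g_power_b_power_eq_1_iff p_power_a_minus_1 by simp
  moreover have "p ^ a = Suc (p ^ a - 1)"
    using prime prime_gt_0_nat by simp
  ultimately show ?thesis
    by (metis mult.right_neutral power_Suc)
qed

lemma g_conjugates_inj: "inj_on (\<lambda>i. g ^ (p ^ (a * i))) {..<b}"
proof (rule inj_on_frobenius_conjugates[OF _ a_pos])
  show "0 < p"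
    using prime by (rule prime_gt_0_nat)
  show "0 < b * c"
    using b_gt_1 c_pos by simp
  have "coprime (p ^ (a * b) - 1) p"
    using coprime_diff_one_left_nat[of "p ^ (a * b)"] \<open>0 < p\<close> a_pos b_gt_1 by simp
  moreover have "b * c dvd p ^ (a * b) - 1"
    using primitive_divisor_n by (simp add: primitive_divisor_def)
  ultimately show "coprime (b * c) p"
    by (rule coprime_divisors[OF _ dvd_refl, rotated])
  show "\<not> b * c dvd p ^ t - 1" if "0 < t" "t < a * b" for t
    using primitive_divisor_n that by (simp add: primitive_divisor_def)
qed (rule g_power_eq_1_iff)

lemma exists_embedding: "\<exists>\<psi> :: 'b \<Rightarrow> 'a. field_embedding \<psi> \<and> range \<psi> = {x. x ^ (p ^ a) = x}"
  using finite_field_embedding[OF prime a_pos card_b primitive0 card_a] by (metis dvd_triv_left)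

lemma card_subfield: "card {x :: 'a. x ^ (p ^ a) = x} = p ^ a"
proof -
  obtain \<psi> :: "'b \<Rightarrow> 'a" where "field_embedding \<psi>" "range \<psi> = {x. x ^ (p ^ a) = x}"
    using exists_embedding by blast
  then show ?thesis
    using card_image[OF field_embedding.inj] card_b by metis
qed

sublocale power_basis p a b g
  using prime a_pos b_gt_1 card_a card_subfield g_conjugates_inj by unfold_locales auto

lemma cweight_eq_sum_root_weight:
  "cweight p (a * b) k \<omega> \<gamma> = (\<Sum>j<b. root_weight p a c (rel_trace p a b (\<gamma> * g ^ j)))"
proof -
  have "(p ^ (a * b) - 1) div k = b * c"
    using p_power_ab_minus_1 k_pos by simp
  then have "cweight p (a * b) k \<omega> \<gamma> = card {i. i < b * c \<and> trace_pm p (a * b) (\<gamma> * \<omega> ^ (k * i)) \<noteq> 0}"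
    by (simp add: cweight_def)
  also have "\<dots> = (\<Sum>j<b. card {t. t < c \<and> trace_pm p (a * b) (\<gamma> * \<omega> ^ (k * (j + b * t))) \<noteq> 0})"
    by (rule card_less_mult_eq_sum)
  also have "\<dots> = (\<Sum>j<b. root_weight p a c (rel_trace p a b (\<gamma> * g ^ j)))"
  proof (rule sum.cong[OF refl])
    fix j
    have "trace_pm p (a * b) (\<gamma> * \<omega> ^ (k * (j + b * t))) =
        trace_pm p a (rel_trace p a b (\<gamma> * g ^ j) * (g ^ b) ^ t)" for t
    proof -
      have "g ^ j * (g ^ b) ^ t = \<omega> ^ (k * j + k * b * t)"
        by (simp add: g_def power_add flip: power_mult)
      then have "\<omega> ^ (k * (j + b * t)) = g ^ j * (g ^ b) ^ t"
        by (simp add: algebra_simps)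
      then have "trace_pm p (a * b) (\<gamma> * \<omega> ^ (k * (j + b * t))) =
          trace_pm p a (rel_trace p a b ((g ^ b) ^ t * (\<gamma> * g ^ j)))"
        unfolding trace_pm_rel_trace[OF char prime a_pos] by (simp add: mult_ac)
      also have "((g ^ b) ^ t) ^ (p ^ a) = (g ^ b) ^ t"
        using g_power_b_fixed by (metis power_mult mult.commute)
      then have "rel_trace p a b ((g ^ b) ^ t * (\<gamma> * g ^ j)) = (g ^ b) ^ t * rel_trace p a b (\<gamma> * g ^ j)"
        by (rule rel_trace_scale)
      finally show ?thesis
        by (simp add: mult.commute)
    qed
    then show "card {t. t < c \<and> trace_pm p (a * b) (\<gamma> * \<omega> ^ (k * (j + b * t))) \<noteq> 0} =
        root_weight p a c (rel_trace p a b (\<gamma> * g ^ j))"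
      using root_weight_eq_card_powers[OF c_pos g_power_b_power_eq_1_iff] by simp
  qed
  finally show ?thesis .
qed

lemma freq_eq_card_lists:
  "freq p (a * b) k \<omega> w = card {ys :: 'b list. length ys = b \<and> sum_list (map (cweight p a u \<omega>0) ys) = w}"
proof -
  obtain \<psi> :: "'b \<Rightarrow> 'a" where \<psi>: "field_embedding \<psi>" and range_\<psi>: "range \<psi> = subfield"
    using exists_embedding by blast
  have order0: "(\<omega>0 ^ u) ^ i = 1 \<longleftrightarrow> c dvd i" for i
    using primitive0 card_b p_power_a_minus_1 u_pos by (intro primitive_elem_power_order) auto
  have cweight_\<psi>: "cweight p a u \<omega>0 = (\<lambda>\<beta>. root_weight p a c (\<psi> \<beta>))"
    using cweight_eq_root_weight[OF primitive0 card_b p_power_a_minus_1]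
      field_embedding.root_weight_hom[OF \<psi> c_pos order0] by (intro ext) simp
  have "cweight p (a * b) k \<omega> \<gamma> = sum_list (map (root_weight p a c) (trace_coords \<gamma>))" for \<gamma>
    by (simp add: cweight_eq_sum_root_weight trace_coords_def sum_list_sum_nth atLeast0LessThan)
  then have "freq p (a * b) k \<omega> w = card {\<gamma> \<in> UNIV. sum_list (map (root_weight p a c) (trace_coords \<gamma>)) = w}"
    by (simp add: freq_def)
  also have "\<dots> = card {xs \<in> vectors. sum_list (map (root_weight p a c) xs) = w}"
    by (rule bij_betw_card_filter[OF bij_trace_coords])
  also have "\<dots> = card {ys \<in> {ys. length ys = b}. sum_list (map (root_weight p a c) (map \<psi> ys)) = w}"
    using bij_betw_map_lists_length[OF field_embedding.inj[OF \<psi>], of b] range_\<psi>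
    by (intro bij_betw_card_filter[symmetric]) (simp add: vectors_def)
  also have "\<dots> = card {ys :: 'b list. length ys = b \<and> sum_list (map (cweight p a u \<omega>0) ys) = w}"
    by (simp add: cweight_\<psi> comp_def)
  finally show ?thesis .
qed


lemma freq_eq_multinomial_sum:
  "freq p (a * b) k \<omega> w =
    (let W0 = range (cweight p a u \<omega>0)
     in \<Sum>l \<in> {l \<in> PiE W0 (\<lambda>_. {0..b}). sum l W0 = b \<and> (\<Sum>v\<in>W0. l v * v) = w}.
          multinom b l W0 * (\<Prod>v\<in>W0. freq p a u \<omega>0 v ^ l v))"
  unfolding freq_eq_card_lists card_lists_weight_eq_multinomial_sum by (simp only: Let_def freq_def)
end

theorem theorem2p2:
  fixes p a b c :: nat
    and \<omega> :: "'a::{finite,field}"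
    and \<omega>0 :: "'b::{finite,field}"
  assumes "prime p" and "a > 0" and "b > 1" and "c > 0"
    and "primitive_divisor p a c"
    and "(p - 1) dvd c"
    and "primitive_divisor p (a * b) (b * c)"
    and "card (UNIV::'a set) = p ^ (a * b)" and "card (UNIV::'b set) = p ^ a"
    and "primitive_elem \<omega>" and "primitive_elem \<omega>0"
  shows "\<forall>w::nat.
    freq p (a * b) ((p ^ (a * b) - 1) div (b * c)) \<omega> w =
    (let u = (p ^ a - 1) div c;
         W0 = range (cweight p a u \<omega>0)
     in \<Sum>l \<in> {l \<in> PiE W0 (\<lambda>_. {0..b}). sum l W0 = b \<and> (\<Sum>v\<in>W0. l v * v) = w}.
          multinom b l W0 * (\<Prod>v\<in>W0. freq p a u \<omega>0 v ^ l v))"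
proof -
  interpret lifted_code p a b c \<omega> \<omega>0
    using assms by unfold_locales auto
  show ?thesis
    using freq_eq_multinomial_sum unfolding k_def u_def Let_def by blast
qed

end
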